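(* The classical monodromy operator $h_\ast:\hat H\to\hat H$ and the operator $\mathrm{Var}^{-1}:\hat H\to\hat H^\ast$ satisfy $$h_\ast=(-1)^n\,\mathrm{Var}\,(\mathrm{Var}^{-1})^T,$$ where $\mathrm{Var}:\hat H^\ast\to\hat H$ is the inverse of $\mathrm{Var}^{-1}$ and $(\mathrm{Var}^{-1})^T:\hat H=\hat H^{\ast\ast}\to\hat H^\ast$ is the transpose of $\mathrm{Var}^{-1}$.
   Context: Let $f=(f_1,\dots,f_{p+1}):(\mathbb C^{n+p},0)\to(\mathbb C^{p+1},0)$ be an analytic germ such that $V=\{f_1=\dots=f_{p+1}=0\}$ is an $(n-1)$-dimensional and $V'=\{f_1=\dots=f_p=0\}$ an $n$-dimensional isolated complete intersection singularity. For a small ball $B_\delta$ and suitable small generic $t$ (with $0<|t_1|\ll\dots\ll|t_{p+1}|\ll\delta$), $V_t=\{x\in B_\delta:f_j(x)=t_j,1\le j\le p+1\}$ and $V'_t=\{x\in B_\delta:f_j(x)=t_j,1\le j\le p\}$; $\hat H=H_n(V'_t,V_t)$, $\hat H^\ast=\operatorname{Hom}(\hat H,\mathbb Z)$. The intersection form $\langle\cdot,\cdot\rangle$ on $\hat H$ is the pullback via the boundary map $\hat H\to H_{n-1}(V_t)$ of the intersection form of $V_t$. Let $\tilde f_{p+1}:V'_t\to\mathbb C$ be a generic perturbation of $f_{p+1}|_{V'_t}$ with only nondegenerate critical points, with distinct critical values $z_1,\dots,z_\nu$, and $z_0$ a noncritical value with $|z_0|>|z_j|$. Paths $u_j$ from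 $z_j$ to $z_0$ in the disc $D=\{|z|\le|z_0|\}$, non-self-intersecting, pairwise meeting only at $z_0$, numbered clockwise by order of arrival at $z_0$ starting from $\partial D$, define (up to orientation) thimbles $\hat\delta_j\in\hat H$ forming a distinguished basis; $\{\nabla_j\}$ is the dual basis. $\mathrm{Var}^{-1}:\hat H\to\hat H^\ast$ is defined by $\mathrm{Var}^{-1}(\hat\delta_i)=(-1)^{n(n+1)/2}\nabla_i-\sum_{j<i}\langle\hat\delta_i,\hat\delta_j\rangle\nabla_j$ (independent of the distinguished basis). The classical monodromy $h_\ast:\hat H\to\hat H$ is the automorphism induced by going once counterclockwise around $\partial D$; equivalently $h_\ast=h_{\hat\delta_1}\circ\dots\circ h_{\hat\delta_\nu}$ with $h_{\hat\delta}(y)=y+(-1)^{n(n+1)/2}\langle y,\hat\delta\rangle\hat\delta$. *)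

theory Defs
  imports "Jordan_Normal_Form.Matrix"
begin

text \<open>Coordinates: elements of H^ are integer column vectors w.r.t. the distinguished
basis delta_0,...,delta_(nu-1) (paper: delta_1..delta_nu); elements of H^* are
column vectors w.r.t. the dual basis nabla. The intersection form is encoded by
its Gram matrix S, S(i,j) = <delta_i, delta_j>.\<close>

definition sgn_eps :: "nat \<Rightarrow> int" where
  "sgn_eps n = (-1) ^ (n * (n + 1) div 2)"

text \<open>Matrix of Var^{-1} : H^ -> H^*; column j = coordinates of Var^{-1}(delta_j),
Var^{-1}(delta_j) = eps nabla_j - sum_{k<j} <delta_j,delta_k> nabla_k.\<close>
definition var_inv_mat :: "nat \<Rightarrow> nat \<Rightarrow> int mat \<Rightarrow> int mat" where
  "var_inv_mat n \<nu> S = mat \<nu> \<nu> (\<lambda>(k, j). if k = j then sgn_eps n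
                                      else if k < j then - S $$ (j, k) else 0)"

text \<open>Matrix of the Picard-Lefschetz transformation h_{delta_k}:
h(y) = y + eps <y, delta_k> delta_k.\<close>
definition PL_mat :: "nat \<Rightarrow> nat \<Rightarrow> int mat \<Rightarrow> nat \<Rightarrow> int mat" where
  "PL_mat n \<nu> S k = mat \<nu> \<nu> (\<lambda>(r, c). (if r = c then 1 else 0)
                              + (if r = k then sgn_eps n * S $$ (c, k) else 0))"

definition monodromy_mat :: "nat \<Rightarrow> nat \<Rightarrow> int mat \<Rightarrow> int mat" where
  "monodromy_mat n \<nu> S = foldr (\<lambda>k M. PL_mat n \<nu> S k * M) [0..<\<nu>] (1\<^sub>m \<nu>)"

end

theory Submission
  imports Defs "Jordan_Normal_Form.Determinant"
begin

text \<open>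
  Write V for the matrix of Var^{-1}, M_m = h_m * ... * h_{\<nu>-1} for the tails of the product of
  Picard-Lefschetz matrices, and V_m for V with the off-diagonal entries of the rows above m erased,
  so that V_0 = V and V_\<nu> = eps * I. Since h_m = I + eps e_m s_m^T with s_m the m-th column of S,
  and V_m e_m = eps e_m, we get V_m h_m = V_{m+1} + e_m l_m^T, where l_m is s_m with its entries
  below position m erased. The rows 0..m of M_{m+1} are those of the identity, so
  l_m^T M_{m+1} = l_m^T, and descending induction on m gives V M_0 = eps I + L, with L the lower
  triangle (diagonal included) of S^T. The (-1)^(n-1)-symmetry of S and the value of its diagonal
  turn eps I + L into (-1)^n V^T; finally V is unitriangular up to the unit eps, hence invertible,
  and multiplying by its inverse Var gives the claim.
\<close>

lemma sgn_eps_square: "sgn_eps n * sgn_eps n = 1"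
  unfolding sgn_eps_def by (simp add: power_mult_distrib[symmetric])

lemma sgn_eps_odd: "sgn_eps (Suc (2 * k)) = - ((-1) ^ k)"
proof -
  have "Suc (2 * k) * (Suc (2 * k) + 1) div 2 = Suc (2 * k) * Suc k" by simp
  then show ?thesis unfolding sgn_eps_def by (simp add: minus_one_power_iff)
qed

lemma sgn_eps_add_self_intersection:
  assumes "n \<ge> 1"
  shows "sgn_eps n + (-1) ^ ((n - 1) * (n - 2) div 2) * (1 + (-1) ^ (n - 1)) = (-1) ^ n * sgn_eps n"
proof (cases "even n")
  case True
  with assms show ?thesis by simp
next
  case False
  then obtain k where n: "n = Suc (2 * k)" by (metis oddE Suc_eq_plus1)
  have "(n - 1) * (n - 2) div 2 = k * (2 * k - 1)" unfolding n by (cases k) auto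
  moreover have "(-1::int) ^ (k * (2 * k - 1)) = (-1) ^ k"
    by (cases k) (auto simp: minus_one_power_iff)
  ultimately show ?thesis by (simp add: n sgn_eps_odd)
qed

lemma invertible_mat_if_det_unit:
  fixes A :: "'a :: comm_ring_1 mat"
  assumes A: "A \<in> carrier_mat n n" and d: "d * det A = 1"
  shows "invertible_mat A"
proof -
  define B where "B = d \<cdot>\<^sub>m adj_mat A"
  have B: "B \<in> carrier_mat n n" using adj_mat(1)[OF A] by (simp add: B_def)
  have "A * B = 1\<^sub>m n"
    unfolding B_def mult_smult_distrib[OF A adj_mat(1)[OF A]] adj_mat(2)[OF A]
    by (rule eq_matI) (use d in \<open>auto simp: ac_simps\<close>)
  moreover have "B * A = 1\<^sub>m n"
    unfolding B_def mult_smult_assoc_mat[OF adj_mat(1)[OF A] A] adj_mat(3)[OF A]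
    by (rule eq_matI) (use d in \<open>auto simp: ac_simps\<close>)
  ultimately show ?thesis
    using A B unfolding invertible_mat_def inverts_mat_def by auto
qed

lemma det_var_inv_mat: "det (var_inv_mat n \<nu> S) = sgn_eps n ^ \<nu>"
proof -
  have V: "var_inv_mat n \<nu> S \<in> carrier_mat \<nu> \<nu>" by (simp add: var_inv_mat_def)
  have "upper_triangular (var_inv_mat n \<nu> S)"
    by (auto simp: upper_triangular_def var_inv_mat_def)
  moreover have "diag_mat (var_inv_mat n \<nu> S) = replicate \<nu> (sgn_eps n)"
    by (rule nth_equalityI) (auto simp: diag_mat_def var_inv_mat_def)
  ultimately show ?thesis
    by (simp add: det_upper_triangular[OF _ V])
qed

lemma invertible_var_inv_mat: "invertible_mat (var_inv_mat n \<nu> S)"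
proof (rule invertible_mat_if_det_unit)
  show "var_inv_mat n \<nu> S \<in> carrier_mat \<nu> \<nu>" by (simp add: var_inv_mat_def)
  show "sgn_eps n ^ \<nu> * det (var_inv_mat n \<nu> S) = 1"
    by (simp add: det_var_inv_mat power_mult_distrib[symmetric] sgn_eps_square)
qed

lemma mult_mat_eq_if_identity_rows:
  fixes A M :: "'a :: semiring_1 mat"
  assumes A: "A \<in> carrier_mat n n" and M: "M \<in> carrier_mat n n"
    and A_cols: "\<And>r j. r < n \<Longrightarrow> j < n \<Longrightarrow> m \<le> j \<Longrightarrow> A $$ (r, j) = 0"
    and M_rows: "\<And>j c. j < m \<Longrightarrow> c < n \<Longrightarrow> M $$ (j, c) = (if j = c then 1 else 0)"
  shows "A * M = A"
proof (rule eq_matI)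
  fix r c assume r: "r < dim_row A" and c: "c < dim_col A"
  have "(A * M) $$ (r, c) = (\<Sum>j<n. A $$ (r, j) * M $$ (j, c))"
    using A M r c by (simp add: scalar_prod_def lessThan_atLeast0)
  also have "\<dots> = (\<Sum>j<n. if j = c then A $$ (r, j) else 0)"
  proof (rule sum.cong)
    fix j assume "j \<in> {..<n}"
    then show "A $$ (r, j) * M $$ (j, c) = (if j = c then A $$ (r, j) else 0)"
      using A r c A_cols M_rows by (cases "j < m") auto
  qed simp
  also have "\<dots> = A $$ (r, c)" using A c by simp
  finally show "(A * M) $$ (r, c) = A $$ (r, c)" .
qed (use A M in auto)

lemma PL_mat_carrier: "PL_mat n \<nu> S k \<in> carrier_mat \<nu> \<nu>"
  by (simp add: PL_mat_def)

lemma mult_PL_mat: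
  assumes "A \<in> carrier_mat \<nu> \<nu>" "k < \<nu>"
  shows "A * PL_mat n \<nu> S k =
    mat \<nu> \<nu> (\<lambda>(r, c). A $$ (r, c) + A $$ (r, k) * sgn_eps n * S $$ (c, k))"
    (is "_ = ?B")
proof (rule eq_matI)
  fix r c assume "r < dim_row ?B" "c < dim_col ?B"
  with assms show "(A * PL_mat n \<nu> S k) $$ (r, c) = ?B $$ (r, c)"
    by (simp add: PL_mat_def scalar_prod_def distrib_left sum.distrib if_distrib[of "(*) _"] cong: if_cong)
qed (use assms in \<open>auto simp: PL_mat_def\<close>)

lemma PL_mat_mult_row_other:
  assumes "Y \<in> carrier_mat \<nu> \<nu>" "r < \<nu>" "c < \<nu>" "r \<noteq> k"
  shows "(PL_mat n \<nu> S k * Y) $$ (r, c) = Y $$ (r, c)"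
  using assms by (simp add: PL_mat_def scalar_prod_def if_distrib[of "\<lambda>x. x * _"] cong: if_cong)

definition monodromy_tail :: "nat \<Rightarrow> nat \<Rightarrow> int mat \<Rightarrow> nat \<Rightarrow> int mat" where
  "monodromy_tail n \<nu> S m = foldr (\<lambda>k M. PL_mat n \<nu> S k * M) [m..<\<nu>] (1\<^sub>m \<nu>)"

definition var_inv_tail :: "nat \<Rightarrow> nat \<Rightarrow> int mat \<Rightarrow> nat \<Rightarrow> int mat" where
  "var_inv_tail n \<nu> S m = mat \<nu> \<nu> (\<lambda>(k, j). if k = j then sgn_eps n
                                        else if m \<le> k \<and> k < j then - S $$ (j, k) else 0)"

lemma monodromy_tail_0: "monodromy_tail n \<nu> S 0 = monodromy_mat n \<nu> S"
  by (simp add: monodromy_tail_def monodromy_mat_def)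

lemma var_inv_tail_0: "var_inv_tail n \<nu> S 0 = var_inv_mat n \<nu> S"
  unfolding var_inv_tail_def var_inv_mat_def by (simp cong: if_cong)

lemma monodromy_tail_carrier: "monodromy_tail n \<nu> S m \<in> carrier_mat \<nu> \<nu>"
proof -
  have "foldr (\<lambda>k M. PL_mat n \<nu> S k * M) ks (1\<^sub>m \<nu>) \<in> carrier_mat \<nu> \<nu>" for ks
    by (induction ks) (simp_all add: mult_carrier_mat[OF PL_mat_carrier])
  then show ?thesis by (simp add: monodromy_tail_def)
qed

lemma monodromy_tail_Suc:
  "m < \<nu> \<Longrightarrow> monodromy_tail n \<nu> S m = PL_mat n \<nu> S m * monodromy_tail n \<nu> S (Suc m)"
  by (simp add: monodromy_tail_def upt_conv_Cons)

lemma monodromy_tail_head_rows: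
  assumes "m \<le> \<nu>" "j < m" "c < \<nu>"
  shows "monodromy_tail n \<nu> S m $$ (j, c) = (if j = c then 1 else 0)"
  using assms(1,2)
proof (induction m rule: inc_induct)
  case (step m)
  have "monodromy_tail n \<nu> S m $$ (j, c) = monodromy_tail n \<nu> S (Suc m) $$ (j, c)"
    using step.hyps(2) step.prems assms(3) monodromy_tail_carrier
    by (simp add: monodromy_tail_Suc PL_mat_mult_row_other)
  with step show ?case by simp
qed (use assms(3) in \<open>simp add: monodromy_tail_def\<close>)

lemma var_inv_tail_mult_PL_mat:
  assumes "m < \<nu>"
  shows "var_inv_tail n \<nu> S m * PL_mat n \<nu> S m =
    var_inv_tail n \<nu> S (Suc m) + mat \<nu> \<nu> (\<lambda>(r, c). if r = m \<and> c \<le> m then S $$ (c, m) else 0)"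
    (is "?V * _ = ?B")
proof (rule eq_matI)
  fix r c assume "r < dim_row ?B" "c < dim_col ?B"
  then have rc: "r < \<nu>" "c < \<nu>" by (auto simp: var_inv_tail_def)
  have "?V \<in> carrier_mat \<nu> \<nu>" by (simp add: var_inv_tail_def)
  then have "(?V * PL_mat n \<nu> S m) $$ (r, c) = ?V $$ (r, c) + ?V $$ (r, m) * sgn_eps n * S $$ (c, m)"
    using rc by (simp add: mult_PL_mat assms)
  moreover have "?V $$ (r, m) = (if r = m then sgn_eps n else 0)"
    using rc assms by (simp add: var_inv_tail_def)
  ultimately show "(?V * PL_mat n \<nu> S m) $$ (r, c) = ?B $$ (r, c)"
    using assms rc by (cases "r = m") (simp_all add: var_inv_tail_def sgn_eps_square)
qed (auto simp: var_inv_tail_def PL_mat_def)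

lemma var_inv_tail_mult_monodromy_tail:
  assumes "m \<le> \<nu>"
  shows "var_inv_tail n \<nu> S m * monodromy_tail n \<nu> S m =
    mat \<nu> \<nu> (\<lambda>(r, c). (if r = c then sgn_eps n else 0)
                       + (if m \<le> r \<and> c \<le> r then S $$ (c, r) else 0))"
  using assms
proof (induction m rule: inc_induct)
  case base
  have "var_inv_tail n \<nu> S \<nu> = sgn_eps n \<cdot>\<^sub>m 1\<^sub>m \<nu>"
    by (rule eq_matI) (auto simp: var_inv_tail_def)
  then show ?case
    by (simp add: monodromy_tail_def) (rule eq_matI; auto)
next
  case (step m)
  define R where "R = mat \<nu> \<nu> (\<lambda>(r, c). if r = m \<and> c \<le> m then S $$ (c, m) else 0)"
  have R: "R \<in> carrier_mat \<nu> \<nu>" by (simp add: R_def)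
  have V: "var_inv_tail n \<nu> S k \<in> carrier_mat \<nu> \<nu>" for k by (simp add: var_inv_tail_def)
  note M = monodromy_tail_carrier[of n \<nu> S "Suc m"]
  have RM: "R * monodromy_tail n \<nu> S (Suc m) = R"
    using step.hyps(2)
    by (intro mult_mat_eq_if_identity_rows[OF R M, of "Suc m"])
      (auto simp: R_def monodromy_tail_head_rows)
  have "var_inv_tail n \<nu> S m * monodromy_tail n \<nu> S m =
      (var_inv_tail n \<nu> S m * PL_mat n \<nu> S m) * monodromy_tail n \<nu> S (Suc m)"
    using step.hyps(2) V M by (simp add: monodromy_tail_Suc assoc_mult_mat[OF V PL_mat_carrier M])
  also have "\<dots> = var_inv_tail n \<nu> S (Suc m) * monodromy_tail n \<nu> S (Suc m)
                  + R * monodromy_tail n \<nu> S (Suc m)"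
    using step.hyps(2)
    by (simp add: var_inv_tail_mult_PL_mat R_def[symmetric] add_mult_distrib_mat[OF V R M])
  also have "\<dots> = mat \<nu> \<nu> (\<lambda>(r, c). (if r = c then sgn_eps n else 0)
                                   + (if m \<le> r \<and> c \<le> r then S $$ (c, r) else 0))"
    unfolding step.IH RM unfolding R_def by (rule eq_matI) auto
  finally show ?case .
qed

lemma var_inv_mat_mult_monodromy_mat:
  "var_inv_mat n \<nu> S * monodromy_mat n \<nu> S =
    mat \<nu> \<nu> (\<lambda>(r, c). (if r = c then sgn_eps n else 0) + (if c \<le> r then S $$ (c, r) else 0))"
  using var_inv_tail_mult_monodromy_tail[of 0 \<nu> n S]
  by (simp add: var_inv_tail_0 monodromy_tail_0)

lemma var_inv_mat_mult_monodromy_mat_eq_transpose: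
  assumes "n \<ge> 1"
    and symm: "\<And>i j. i < \<nu> \<Longrightarrow> j < \<nu> \<Longrightarrow> S $$ (i, j) = (-1) ^ (n - 1) * S $$ (j, i)"
    and diag: "\<And>i. i < \<nu> \<Longrightarrow>
           S $$ (i, i) = (-1) ^ ((n - 1) * (n - 2) div 2) * (1 + (-1) ^ (n - 1))"
  shows "var_inv_mat n \<nu> S * monodromy_mat n \<nu> S = (-1) ^ n \<cdot>\<^sub>m transpose_mat (var_inv_mat n \<nu> S)"
  unfolding var_inv_mat_mult_monodromy_mat
proof (rule eq_matI)
  fix r c assume "r < dim_row ((-1) ^ n \<cdot>\<^sub>m transpose_mat (var_inv_mat n \<nu> S))"
    and "c < dim_col ((-1) ^ n \<cdot>\<^sub>m transpose_mat (var_inv_mat n \<nu> S))"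
  then have r: "r < \<nu>" and c: "c < \<nu>" by (auto simp: var_inv_mat_def)
  have sign: "(-1::int) ^ (n - 1) = - ((-1) ^ n)"
    using assms(1) by (cases n) auto
  consider "r = c" | "c < r" | "r < c" by linarith
  then show "mat \<nu> \<nu> (\<lambda>(r, c). (if r = c then sgn_eps n else 0)
                              + (if c \<le> r then S $$ (c, r) else 0)) $$ (r, c)
      = ((-1) ^ n \<cdot>\<^sub>m transpose_mat (var_inv_mat n \<nu> S)) $$ (r, c)"
  proof cases
    case 1
    then show ?thesis
      using r diag[OF r] sgn_eps_add_self_intersection[OF assms(1)] by (simp add: var_inv_mat_def)
  next
    case 2
    then show ?thesis using r c symm[OF c r] sign by (simp add: var_inv_mat_def)
  qed (use r c in \<open>simp add: var_inv_mat_def\<close>)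
qed (auto simp: var_inv_mat_def)

theorem proposition4:
  fixes n \<nu> :: nat and S :: "int mat"
  assumes "n \<ge> 1"
    and "S \<in> carrier_mat \<nu> \<nu>"
    and "\<And>i j. i < \<nu> \<Longrightarrow> j < \<nu> \<Longrightarrow> S $$ (i, j) = (-1) ^ (n - 1) * S $$ (j, i)"
    and "\<And>i. i < \<nu> \<Longrightarrow>
           S $$ (i, i) = (-1) ^ ((n - 1) * (n - 2) div 2) * (1 + (-1) ^ (n - 1))"
  shows "invertible_mat (var_inv_mat n \<nu> S) \<and>
         (\<forall>Var \<in> carrier_mat \<nu> \<nu>. inverts_mat Var (var_inv_mat n \<nu> S) \<and>
                                  inverts_mat (var_inv_mat n \<nu> S) Var \<longrightarrow>
            monodromy_mat n \<nu> S = ((-1) ^ n) \<cdot>\<^sub>m (Var * transpose_mat (var_inv_mat n \<nu> S)))"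
proof (intro conjI ballI impI)
  show "invertible_mat (var_inv_mat n \<nu> S)" by (rule invertible_var_inv_mat)
next
  fix Var :: "int mat"
  assume Var: "Var \<in> carrier_mat \<nu> \<nu>"
    and "inverts_mat Var (var_inv_mat n \<nu> S) \<and> inverts_mat (var_inv_mat n \<nu> S) Var"
  then have left_inverse: "Var * var_inv_mat n \<nu> S = 1\<^sub>m \<nu>" by (simp add: inverts_mat_def)
  have V: "var_inv_mat n \<nu> S \<in> carrier_mat \<nu> \<nu>" by (simp add: var_inv_mat_def)
  have M: "monodromy_mat n \<nu> S \<in> carrier_mat \<nu> \<nu>"
    using monodromy_tail_carrier[of n \<nu> S 0] by (simp add: monodromy_tail_0)
  have "monodromy_mat n \<nu> S = Var * (var_inv_mat n \<nu> S * monodromy_mat n \<nu> S)"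
    using Var V M by (simp add: assoc_mult_mat[symmetric, OF Var V M] left_inverse)
  also have "\<dots> = (-1) ^ n \<cdot>\<^sub>m (Var * transpose_mat (var_inv_mat n \<nu> S))"
    using Var V by (simp add: var_inv_mat_mult_monodromy_mat_eq_transpose[OF assms(1,3,4)] mult_smult_distrib)
  finally show "monodromy_mat n \<nu> S = (-1) ^ n \<cdot>\<^sub>m (Var * transpose_mat (var_inv_mat n \<nu> S))" .
qed

end
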